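(* Let $j\geq 7$ and $\mu_1,\mu_2>0$. Then for every integer $l$ with $2\leq l\leq \lfloor (j+1)/2\rfloor$ one has $\mathbf{g}_1(j,l)>0$ and $\chi(j,l):=\mu_1\mu_2\left[\mathbf{g}_1(j,l)^2+\mathbf{g}_2(j)^2-\mathbf{g}_3(j,l)^2\right]+(\mu_1^2+\mu_2^2)\,\mathbf{g}_1(j,l)\,\mathbf{g}_2(j)>0 .$
   Context: For $\varphi\in\mathbb{R}\setminus2\pi\mathbb{Z}$ let $\mathbf{f}(\varphi)=\frac{1}{8|\sin(\varphi/2)|}\left(\frac{2}{\sin^2(\varphi/2)}-1\right)+\cos\varphi$. Define $\mathbf{g}_1(j,l)=\sum_{k=1}^{j-1}\mathbf{f}(\frac{2k\pi}{j})(1-\cos\frac{2(l-1)k\pi}{j})$, $\mathbf{g}_2(j)=\sum_{k=1}^{j}\mathbf{f}(\frac{(2k-1)\pi}{j})$, $\mathbf{g}_3(j,l)=\sum_{k=1}^{j}\mathbf{f}(\frac{(2k-1)\pi}{j})\cos\frac{(l-1)(2k-1)\pi}{j}$. *)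

theory Defs
  imports Complex_Main
begin

definition ff :: "real \<Rightarrow> real" where
  "ff \<phi> = 1 / (8 * \<bar>sin (\<phi>/2)\<bar>) * (2 / (sin (\<phi>/2))^2 - 1) + cos \<phi>"

definition g1 :: "nat \<Rightarrow> nat \<Rightarrow> real" where
  "g1 j l = (\<Sum>k=1..j-1. ff (2 * real k * pi / real j) *
              (1 - cos (2 * (real l - 1) * real k * pi / real j)))"

definition g2 :: "nat \<Rightarrow> real" where
  "g2 j = (\<Sum>k=1..j. ff ((2 * real k - 1) * pi / real j))"

definition g3 :: "nat \<Rightarrow> nat \<Rightarrow> real" where
  "g3 j l = (\<Sum>k=1..j. ff ((2 * real k - 1) * pi / real j) *
              cos ((real l - 1) * (2 * real k - 1) * pi / real j))"

definition chi :: "real \<Rightarrow> real \<Rightarrow> nat \<Rightarrow> nat \<Rightarrow> real" where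
  "chi \<mu>1 \<mu>2 j l = \<mu>1 * \<mu>2 * ((g1 j l)^2 + (g2 j)^2 - (g3 j l)^2)
                    + (\<mu>1^2 + \<mu>2^2) * g1 j l * g2 j"

end

theory Submission
  imports Defs "HOL-Analysis.Complex_Transcendental"
begin

text \<open>
  Split \<open>ff \<phi> = A \<phi> + cos \<phi>\<close> with the nonnegative singular part
  \<open>A \<phi> = (2 / sin\<^sup>2(\<phi>/2) - 1) / (8 \<bar>sin (\<phi>/2)\<bar>)\<close>.
  After product-to-sum, the cosine parts of \<open>g\<^sub>1, g\<^sub>2, g\<^sub>3\<close> are sums of \<open>cos (p \<phi>)\<close>
  over \<open>\<phi> = 2k\<pi>/j\<close> resp. \<open>\<phi> = (2k-1)\<pi>/j\<close>, which equal \<open>-1\<close> resp. \<open>0\<close> for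
  \<open>0 < p < j\<close>; the frequency \<open>p = 0\<close> only occurs for \<open>l = 2\<close>.
  Hence for \<open>l \<ge> 3\<close> the functions \<open>g\<^sub>i\<close> are the corresponding sums over \<open>A\<close>, so
  \<open>g\<^sub>1 > 0\<close> and \<open>\<bar>g\<^sub>3\<bar> \<le> g\<^sub>2\<close>.
  For \<open>l = 2\<close> the cosine parts shift \<open>g\<^sub>1\<close> and \<open>g\<^sub>3\<close> by \<open>-j/2\<close> and \<open>+j/2\<close>, and
  \<open>A \<phi> (1 - cos \<phi>) = (2 / sin (\<phi>/2) - sin (\<phi>/2)) / 4\<close> reduces \<open>g\<^sub>1 > 0\<close> and
  \<open>g\<^sub>1 + g\<^sub>2 - g\<^sub>3 > 0\<close> to \<open>\<Sum>k=1..N-1. 2 / sin (k\<pi>/N) - sin (k\<pi>/N) > 2N\<close> for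
  \<open>N = j\<close> and \<open>N = 2j\<close> (for \<open>N = 2j\<close> the even and odd \<open>k\<close> give the two sums).
  This estimate follows from Taylor bounds for \<open>N = 7, 8\<close> and from \<open>sin x \<le> x\<close> for \<open>N \<ge> 9\<close>.
  Finally \<open>\<chi> = \<mu>\<^sub>1\<mu>\<^sub>2((g\<^sub>1 + g\<^sub>2)\<^sup>2 - g\<^sub>3\<^sup>2) + (\<mu>\<^sub>1 - \<mu>\<^sub>2)\<^sup>2 g\<^sub>1 g\<^sub>2\<close>.
\<close>

lemma sum_cos_odd_multiples:
  "2 * sin y * (\<Sum>k=1..n. cos ((2 * real k - 1) * y)) = sin (2 * real n * y)"
proof (induction n)
  case (Suc n)
  have "2 * sin y * cos ((2 * real (Suc n) - 1) * y) = sin (2 * real (Suc n) * y) - sin (2 * real n * y)"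
    using sin_times_cos[of y "(2 * real (Suc n) - 1) * y"] by (simp add: algebra_simps)
  with Suc show ?case by (simp add: distrib_left)
qed simp

lemma sum_cos_even_multiples:
  "2 * sin y * (\<Sum>k=1..n. cos (2 * real k * y)) = sin ((2 * real n + 1) * y) - sin y"
proof (induction n)
  case (Suc n)
  have "y + 2 * real (Suc n) * y = (2 * real (Suc n) + 1) * y"
    and "y - 2 * real (Suc n) * y = - ((2 * real n + 1) * y)" by (simp_all add: algebra_simps)
  then have "2 * sin y * cos (2 * real (Suc n) * y) = sin ((2 * real (Suc n) + 1) * y) - sin ((2 * real n + 1) * y)"
    using sin_times_cos[of y "2 * real (Suc n) * y"] by simp
  with Suc show ?case by (simp add: distrib_left)
qed simp

lemma sum_cos_roots_of_unity:
  assumes "p < n"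
  shows "(\<Sum>k=1..n-1. cos (real p * (2 * real k * pi / real n))) = (if p = 0 then real n - 1 else -1)"
proof (cases "p = 0")
  case True
  then show ?thesis using assms by simp
next
  case False
  define y where "y = real p * pi / real n"
  have "sin y > 0" using assms False by (intro sin_gt_zero) (auto simp: y_def field_simps)
  have "(2 * real (n - 1) + 1) * y = 2 * real p * pi - y"
    using assms by (simp add: y_def field_simps)
  then have "sin ((2 * real (n - 1) + 1) * y) = - sin y"
    by (simp add: sin_diff)
  with sum_cos_even_multiples[of y "n - 1"] \<open>sin y > 0\<close>
  have "sin y * (\<Sum>k=1..n-1. cos (2 * real k * y)) = sin y * (-1)" by simp
  then have "(\<Sum>k=1..n-1. cos (2 * real k * y)) = -1"
    using \<open>sin y > 0\<close> by (metis mult_cancel_left order_less_irrefl)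
  moreover have "real p * (2 * real k * pi / real n) = 2 * real k * y" for k by (simp add: y_def)
  ultimately show ?thesis using False by simp
qed

lemma sum_cos_odd_angles:
  assumes "p < n"
  shows "(\<Sum>k=1..n. cos (real p * ((2 * real k - 1) * pi / real n))) = (if p = 0 then real n else 0)"
proof (cases "p = 0")
  case False
  define y where "y = real p * pi / real n"
  have "sin y > 0" using assms False by (intro sin_gt_zero) (auto simp: y_def field_simps)
  have "2 * real n * y = real (2 * p) * pi" using assms by (simp add: y_def)
  then have "sin (2 * real n * y) = 0" by (simp only: sin_npi)
  with sum_cos_odd_multiples[of y n] \<open>sin y > 0\<close>
  have "(\<Sum>k=1..n. cos ((2 * real k - 1) * y)) = 0" by simp
  moreover have "real p * ((2 * real k - 1) * pi / real n) = (2 * real k - 1) * y" for k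
    by (simp add: y_def)
  ultimately show ?thesis using False by simp
qed simp

lemma sum_odd_even_split:
  fixes n :: nat
  shows "(\<Sum>i=1..2*n-1. f i) = (\<Sum>k=1..n-1. f (2*k)) + (\<Sum>k=1..n. f (2*k-1) :: 'a::comm_monoid_add)"
proof (induction n)
  case (Suc n)
  show ?case
  proof (cases n)
    case (Suc n')
    have "{1..2 * Suc n - 1} = insert (2*n+1) (insert (2*n) {1..2*n-1})" using Suc by auto
    then have "(\<Sum>i=1..2 * Suc n - 1. f i) = f (2*n+1) + (f (2*n) + (\<Sum>i=1..2*n-1. f i))"
      using Suc by simp
    moreover have "(\<Sum>k=1..Suc n - 1. f (2*k)) = f (2*n) + (\<Sum>k=1..n-1. f (2*k))"
      using Suc by (simp add: add.commute)
    moreover have "(\<Sum>k=1..Suc n. f (2*k-1)) = f (2*n+1) + (\<Sum>k=1..n. f (2*k-1))"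
      by (simp add: add.commute)
    ultimately show ?thesis using Suc.IH by (simp add: ac_simps)
  qed simp
qed simp

definition csc_sin :: "real \<Rightarrow> real" where
  "csc_sin x = 2 / sin x - sin x"

lemma csc_sin_reflect: "csc_sin (pi - x) = csc_sin x"
  by (simp add: csc_sin_def)

lemma csc_sin_ge_of_sin_le:
  assumes "0 < x" "x < pi" "sin x \<le> u"
  shows "2 / u - u \<le> csc_sin x"
proof -
  have "sin x > 0" using assms by (intro sin_gt_zero)
  then have "2 / u \<le> 2 / sin x" using assms by (simp add: frac_le)
  then show ?thesis unfolding csc_sin_def using assms by linarith
qed

lemma csc_sin_ge_one: "0 < x \<Longrightarrow> x < pi \<Longrightarrow> 1 \<le> csc_sin x"
  using csc_sin_ge_of_sin_le[OF _ _ sin_le_one] by simp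

lemma csc_sin_ge_linear: "0 < x \<Longrightarrow> x < pi \<Longrightarrow> 2 / x - x \<le> csc_sin x"
  using csc_sin_ge_of_sin_le[OF _ _ sin_x_le_x] by simp

lemma sin_le_taylor:
  fixes x lo hi :: real
  assumes "0 \<le> lo" "lo \<le> x" "x \<le> hi"
  shows "sin x \<le> hi - lo^3/6 + hi^5/120 + hi^7/5040"
proof -
  have "sin_coeff 0 = 0" "sin_coeff 1 = 1" "sin_coeff 2 = 0" "sin_coeff 3 = -1/6"
    "sin_coeff 4 = 0" "sin_coeff 5 = 1/120" "sin_coeff 6 = 0"
    by (simp_all add: sin_coeff_def fact_numeral)
  then have "(\<Sum>m<7. sin_coeff m * x ^ m) = x - x^3/6 + x^5/120"
    by (simp add: eval_nat_numeral)
  then have "sin x \<le> x - x^3/6 + x^5/120 + x^7/5040"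
    using Maclaurin_sin_bound[of x 7] assms by (simp add: fact_numeral abs_if split: if_splits)
  moreover have "lo^3 \<le> x^3" "x^5 \<le> hi^5" "x^7 \<le> hi^7"
    using assms by (auto intro: power_mono)
  ultimately show ?thesis using assms by linarith
qed

lemma pi_bounds: "314159 / 100000 \<le> pi" "pi \<le> 31416 / 10000"
  using pi_approx by (auto intro: order_trans)

lemma csc_sin_frac_pi_ge:
  fixes k N :: nat
  defines "lo \<equiv> real k * (314159 / 100000) / real N" and "hi \<equiv> real k * (31416 / 10000) / real N"
  assumes "0 < k" "k < N" and u: "hi - lo^3/6 + hi^5/120 + hi^7/5040 \<le> u"
  shows "2 / u - u \<le> csc_sin (real k * pi / real N)"
proof (rule csc_sin_ge_of_sin_le)
  show "0 < real k * pi / real N" "real k * pi / real N < pi"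
    using assms by (auto simp: field_simps)
  have "lo \<le> real k * pi / real N" "real k * pi / real N \<le> hi"
    unfolding lo_def hi_def by (intro divide_right_mono mult_left_mono pi_bounds; simp)+
  then show "sin (real k * pi / real N) \<le> u"
    using sin_le_taylor[of lo "real k * pi / real N" hi] u unfolding lo_def by simp
qed

lemma csc_sin_frac_reflect:
  "k \<le> N \<Longrightarrow> csc_sin (real (N - k) * pi / real N) = csc_sin (real k * pi / real N)"
proof (cases "N = 0")
  case False
  assume "k \<le> N"
  then have "real (N - k) * pi / real N = pi - real k * pi / real N"
    using False by (simp add: field_simps)
  then show ?thesis by (simp add: csc_sin_reflect)
qed simp

lemma sum_csc_sin_7: "(\<Sum>k=1..6. csc_sin (real k * pi / 7)) > 14"
proof -
  have "csc_sin (real (7 - k) * pi / 7) = csc_sin (real k * pi / 7)" if "k \<le> 7" for k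
    using csc_sin_frac_reflect[OF that] by simp
  from this[of 1] this[of 2] this[of 3]
  have "(\<Sum>k=1..6. csc_sin (real k * pi / 7)) = 2 * (csc_sin (pi / 7) + csc_sin (2 * pi / 7) + csc_sin (3 * pi / 7))"
    by (simp add: numeral_eq_Suc)
  moreover have "41755/10000 \<le> csc_sin (pi / 7)"
    using csc_sin_frac_pi_ge[of 1 7 "0.43389"] by (simp add: power_divide)
  moreover have "17754/10000 \<le> csc_sin (2 * pi / 7)"
    using csc_sin_frac_pi_ge[of 2 7 "0.78202"] by (simp add: power_divide)
  moreover have "10667/10000 \<le> csc_sin (3 * pi / 7)"
    using csc_sin_frac_pi_ge[of 3 7 "0.97808"] by (simp add: power_divide)
  ultimately show ?thesis by (simp add: field_simps)
qed

lemma sum_csc_sin_8: "(\<Sum>k=1..7. csc_sin (real k * pi / 8)) > 16"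
proof -
  have "csc_sin (real (8 - k) * pi / 8) = csc_sin (real k * pi / 8)" if "k \<le> 8" for k
    using csc_sin_frac_reflect[OF that] by simp
  from this[of 1] this[of 2] this[of 3]
  have "(\<Sum>k=1..7. csc_sin (real k * pi / 8))
      = 2 * (csc_sin (pi / 8) + csc_sin (2 * pi / 8) + csc_sin (3 * pi / 8)) + csc_sin (4 * pi / 8)"
    by (simp add: numeral_eq_Suc)
  moreover have "48434/10000 \<le> csc_sin (pi / 8)"
    using csc_sin_frac_pi_ge[of 1 8 "0.38269"] by (simp add: power_divide)
  moreover have "21209/10000 \<le> csc_sin (2 * pi / 8)"
    using csc_sin_frac_pi_ge[of 2 8 "0.70719"] by (simp add: power_divide)
  moreover have "12367/10000 \<le> csc_sin (3 * pi / 8)"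
    using csc_sin_frac_pi_ge[of 3 8 "0.92513"] by (simp add: power_divide)
  moreover have "1 \<le> csc_sin (4 * pi / 8)"
    by (rule csc_sin_ge_one) auto
  ultimately show ?thesis by (simp add: field_simps)
qed

lemma frac_pi_estimate:
  assumes "9 \<le> N"
  shows "real N + 5 < 6 * (real N / pi - pi / real N)"
proof -
  have N: "real N \<ge> 9" using assms by simp
  have "real N * real N * (6 - pi) \<ge> 9 * real N * (6 - pi)"
    using N pi_bounds by (intro mult_right_mono) auto
  moreover have "pi * real N \<le> 31416 / 10000 * real N" "pi * pi \<le> 31416 / 10000 * (31416 / 10000)"
    by (intro mult_right_mono mult_mono pi_bounds; simp)+
  ultimately have "real N * real N * (6 - pi) - 5 * pi * real N - 6 * pi * pi > 0"
    using N by (simp only: algebra_simps)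
  then show ?thesis using N by (simp add: field_simps)
qed

lemma sum_csc_sin_ge_9:
  assumes "9 \<le> N"
  shows "(\<Sum>k=1..N-1. csc_sin (real k * pi / real N)) > 2 * real N"
proof -
  define f where "f k = csc_sin (real k * pi / real N)" for k
  define I where "I = {1..N-1}"
  define A where "A = {1, 2, N - 1, N - 2}"
  obtain M where M: "N = M + 9" using assms by (metis add.commute le_Suc_ex)
  have A: "A \<subseteq> I" "card A = 4" "finite A"
    by (auto simp: A_def I_def M)
  have reflect: "f (N - k) = f k" if "k \<le> N" for k
    using csc_sin_frac_reflect[OF that] by (simp add: f_def)
  have "f (N - 1) = f 1" "f (N - 2) = f 2"
    using reflect assms by simp_all
  moreover have "sum f A = f 1 + f 2 + f (N - 1) + f (N - 2)"
    by (simp add: A_def M)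
  ultimately have sum_A: "sum f A = 2 * (f 1 + f 2)"
    by (simp only:) simp
  have "f k \<ge> 1" if "k \<in> I" for k
    unfolding f_def using that by (intro csc_sin_ge_one) (auto simp: I_def field_simps)
  then have "sum f (I - A) \<ge> real (card (I - A)) * 1"
    by (intro sum_bounded_below) auto
  moreover have "card (I - A) = N - 5"
    using A by (simp add: card_Diff_subset I_def)
  ultimately have rest: "sum f (I - A) \<ge> real N - 5"
    using assms by simp
  have "f k \<ge> 2 / (real k * pi / real N) - real k * pi / real N" if "k = 1 \<or> k = 2" for k
    unfolding f_def using that assms by (intro csc_sin_ge_linear) (auto simp: field_simps)
  from this[of 1] this[of 2] have lin: "f 1 + f 2 \<ge> 3 * (real N / pi - pi / real N)"
    by simp
  moreover have "real N + 5 < 6 * (real N / pi - pi / real N)"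
    using assms by (rule frac_pi_estimate)
  moreover have "sum f I = sum f (I - A) + sum f A"
    using A by (simp add: sum.subset_diff I_def)
  ultimately have "sum f I > 2 * real N"
    using rest sum_A lin by simp
  then show ?thesis by (simp add: f_def I_def)
qed

lemma sum_csc_sin_gt:
  assumes "7 \<le> N"
  shows "(\<Sum>k=1..N-1. csc_sin (real k * pi / real N)) > 2 * real N"
proof -
  consider "N = 7" | "N = 8" | "9 \<le> N" using assms by linarith
  then show ?thesis
    using sum_csc_sin_7 sum_csc_sin_8 sum_csc_sin_ge_9 by cases simp_all
qed

definition ff_singular :: "real \<Rightarrow> real" where
  "ff_singular \<phi> = 1 / (8 * \<bar>sin (\<phi>/2)\<bar>) * (2 / (sin (\<phi>/2))^2 - 1)"

lemma ff_eq_singular_plus_cos: "ff \<phi> = ff_singular \<phi> + cos \<phi>"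
  by (simp add: ff_def ff_singular_def)

lemma ff_singular_pos:
  assumes "sin (\<phi>/2) \<noteq> 0"
  shows "ff_singular \<phi> > 0"
proof -
  have "(sin (\<phi>/2))^2 \<le> 1" using abs_sin_le_one by (simp add: abs_square_le_1)
  then have "2 / (sin (\<phi>/2))^2 > 1" using assms by (simp add: field_simps)
  then show ?thesis using assms by (simp add: ff_singular_def)
qed

lemma ff_singular_nonneg: "ff_singular \<phi> \<ge> 0"
  using ff_singular_pos[of \<phi>] by (cases "sin (\<phi>/2) = 0") (auto simp: ff_singular_def)

lemma ff_singular_mult_one_minus_cos:
  assumes "sin (\<phi>/2) > 0"
  shows "ff_singular \<phi> * (1 - cos \<phi>) = csc_sin (\<phi>/2) / 4"
proof -
  have "1 - cos \<phi> = 2 * (sin (\<phi>/2))^2"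
    using cos_double_sin[of "\<phi>/2"] by simp
  then show ?thesis
    unfolding \<open>1 - cos \<phi> = _\<close> using assms by (simp add: ff_singular_def csc_sin_def field_simps power2_eq_square)
qed

lemma cos_times_cos_multiple:
  assumes "1 \<le> m"
  shows "cos x * cos (real m * x) = (cos (real (m - 1) * x) + cos (real (m + 1) * x)) / 2"
  using cos_times_cos[of "real m * x" x] assms by (simp add: algebra_simps)

definition g1_singular :: "nat \<Rightarrow> nat \<Rightarrow> real" where
  "g1_singular j m = (\<Sum>k=1..j-1. ff_singular (2 * real k * pi / real j)
                        * (1 - cos (real m * (2 * real k * pi / real j))))"

definition g2_singular :: "nat \<Rightarrow> real" where
  "g2_singular j = (\<Sum>k=1..j. ff_singular ((2 * real k - 1) * pi / real j))"

definition g3_singular :: "nat \<Rightarrow> nat \<Rightarrow> real" where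
  "g3_singular j m = (\<Sum>k=1..j. ff_singular ((2 * real k - 1) * pi / real j)
                        * cos (real m * ((2 * real k - 1) * pi / real j)))"

lemma g1_eq_singular:
  assumes "1 \<le> m" "m + 1 < j"
  shows "g1 j (m + 1) = g1_singular j m - (if m = 1 then real j / 2 else 0)"
proof -
  define \<theta> where "\<theta> k = 2 * real k * pi / real j" for k
  define S where "S p = (\<Sum>k=1..j-1. cos (real p * \<theta> k))" for p
  have S: "S p = (if p = 0 then real j - 1 else -1)" if "p < j" for p
    using sum_cos_roots_of_unity[OF that] by (simp add: S_def \<theta>_def)
  have "ff (\<theta> k) * (1 - cos (2 * (real (m + 1) - 1) * real k * pi / real j))
      = ff_singular (\<theta> k) * (1 - cos (real m * \<theta> k))
        + (cos (real 1 * \<theta> k) - cos (real (m + 1) * \<theta> k) / 2 - cos (real (m - 1) * \<theta> k) / 2)" for k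
    using cos_times_cos_multiple[OF assms(1), of "\<theta> k"]
    by (simp add: ff_eq_singular_plus_cos \<theta>_def algebra_simps)
  then have "g1 j (m + 1) = g1_singular j m + (S 1 - S (m + 1) / 2 - S (m - 1) / 2)"
    unfolding g1_def g1_singular_def S_def \<theta>_def
    by (simp add: sum.distrib sum_subtractf sum_divide_distrib)
  then show ?thesis
    using assms S[of 1] S[of "m + 1"] S[of "m - 1"] by (auto simp: field_simps)
qed

lemma g2_eq_singular:
  assumes "2 \<le> j"
  shows "g2 j = g2_singular j"
  using sum_cos_odd_angles[of 1 j] assms
  by (simp add: g2_def g2_singular_def ff_eq_singular_plus_cos sum.distrib)

lemma g3_eq_singular:
  assumes "1 \<le> m" "m + 1 < j"
  shows "g3 j (m + 1) = g3_singular j m + (if m = 1 then real j / 2 else 0)"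
proof -
  define \<psi> where "\<psi> k = (2 * real k - 1) * pi / real j" for k
  define S where "S p = (\<Sum>k=1..j. cos (real p * \<psi> k))" for p
  have S: "S p = (if p = 0 then real j else 0)" if "p < j" for p
    using sum_cos_odd_angles[OF that] by (simp add: S_def \<psi>_def)
  have "ff (\<psi> k) * cos ((real (m + 1) - 1) * (2 * real k - 1) * pi / real j)
      = ff_singular (\<psi> k) * cos (real m * \<psi> k)
        + (cos (real (m - 1) * \<psi> k) / 2 + cos (real (m + 1) * \<psi> k) / 2)" for k
    using cos_times_cos_multiple[OF assms(1), of "\<psi> k"]
    by (simp add: ff_eq_singular_plus_cos \<psi>_def algebra_simps)
  then have "g3 j (m + 1) = g3_singular j m + (S (m - 1) / 2 + S (m + 1) / 2)"
    unfolding g3_def g3_singular_def S_def \<psi>_def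
    by (simp add: sum.distrib sum_divide_distrib)
  then show ?thesis
    using assms S[of "m + 1"] S[of "m - 1"] by auto
qed

lemma sin_half_odd_angle_pos:
  assumes "1 \<le> k" "k \<le> j"
  shows "sin ((2 * real k - 1) * pi / real j / 2) > 0"
proof (rule sin_gt_zero)
  have "(2 * real k - 1) * pi < 2 * real j * pi"
    using assms by (intro mult_strict_right_mono) auto
  then show "(2 * real k - 1) * pi / real j / 2 < pi"
    using assms by (simp add: field_simps)
qed (use assms in simp)

lemma g2_singular_pos:
  assumes "1 \<le> j"
  shows "g2_singular j > 0"
  unfolding g2_singular_def using assms sin_half_odd_angle_pos
  by (intro sum_pos ff_singular_pos) (auto simp: less_le)

lemma abs_g3_singular_le: "\<bar>g3_singular j m\<bar> \<le> g2_singular j"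
  unfolding g3_singular_def g2_singular_def
proof (rule order_trans[OF sum_abs sum_mono])
  fix k
  show "\<bar>ff_singular ((2 * real k - 1) * pi / real j) * cos (real m * ((2 * real k - 1) * pi / real j))\<bar>
      \<le> ff_singular ((2 * real k - 1) * pi / real j)"
    using ff_singular_nonneg by (simp add: abs_mult mult_left_le)
qed

lemma g1_singular_pos:
  assumes "1 \<le> m" "m < j"
  shows "g1_singular j m > 0"
  unfolding g1_singular_def
proof (rule sum_pos2[where i = 1])
  have "sin (pi / real j) > 0" "sin (real m * pi / real j) > 0"
    using assms by (auto intro!: sin_gt_zero simp: field_simps)
  moreover have "1 - cos (real m * (2 * pi / real j)) = 2 * (sin (real m * pi / real j))^2"
    using cos_double_sin[of "real m * pi / real j"] by (simp add: algebra_simps)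
  ultimately show "0 < ff_singular (2 * real 1 * pi / real j) * (1 - cos (real m * (2 * real 1 * pi / real j)))"
    by (simp add: ff_singular_pos)
qed (use assms ff_singular_nonneg in \<open>auto intro!: mult_nonneg_nonneg simp: cos_le_one\<close>)

lemma g1_singular_one: "g1_singular j 1 = (\<Sum>k=1..j-1. csc_sin (real k * pi / real j)) / 4"
  unfolding g1_singular_def sum_divide_distrib
proof (rule sum.cong[OF refl])
  fix k assume "k \<in> {1..j-1}"
  then have "sin (2 * real k * pi / real j / 2) > 0"
    by (intro sin_gt_zero) (auto simp: field_simps)
  then show "ff_singular (2 * real k * pi / real j) * (1 - cos (real 1 * (2 * real k * pi / real j)))
      = csc_sin (real k * pi / real j) / 4"
    by (simp add: ff_singular_mult_one_minus_cos)
qed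

lemma g2_minus_g3_singular_one:
  "g2_singular j - g3_singular j 1 = (\<Sum>k=1..j. csc_sin (real (2 * k - 1) * pi / real (2 * j))) / 4"
  unfolding g2_singular_def g3_singular_def sum_subtractf[symmetric] sum_divide_distrib
proof (rule sum.cong[OF refl])
  fix k assume "k \<in> {1..j}"
  then have "(2 * real k - 1) * pi / real j / 2 = real (2 * k - 1) * pi / real (2 * j)"
    and "sin ((2 * real k - 1) * pi / real j / 2) > 0"
    using sin_half_odd_angle_pos by (auto simp: field_simps)
  then show "ff_singular ((2 * real k - 1) * pi / real j)
      - ff_singular ((2 * real k - 1) * pi / real j) * cos (real 1 * ((2 * real k - 1) * pi / real j))
      = csc_sin (real (2 * k - 1) * pi / real (2 * j)) / 4"
    using ff_singular_mult_one_minus_cos by (simp add: right_diff_distrib)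
qed

lemma g2_plus_g3_singular_one_nonneg: "g2_singular j + g3_singular j 1 \<ge> 0"
  unfolding g2_singular_def g3_singular_def sum.distrib[symmetric]
proof (rule sum_nonneg)
  have "0 \<le> ff_singular x * (1 + cos x)" for x
    using ff_singular_nonneg[of x] cos_ge_minus_one[of x] by (intro mult_nonneg_nonneg) linarith+
  then show "0 \<le> ff_singular ((2 * real k - 1) * pi / real j)
      + ff_singular ((2 * real k - 1) * pi / real j) * cos (real 1 * ((2 * real k - 1) * pi / real j))" for k
    by (simp add: distrib_left)
qed

lemma g_bounds_higher_harmonic:
  assumes "2 \<le> m" "2 * m < j"
  shows "g1 j (m + 1) > 0 \<and> \<bar>g3 j (m + 1)\<bar> < g1 j (m + 1) + g2 j"
proof -
  have "g1 j (m + 1) = g1_singular j m" "g2 j = g2_singular j" "g3 j (m + 1) = g3_singular j m"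
    using assms g1_eq_singular g2_eq_singular g3_eq_singular by auto
  moreover have "g1_singular j m > 0"
    using assms by (intro g1_singular_pos) auto
  ultimately show ?thesis
    using abs_g3_singular_le[of j m] by simp
qed

lemma g_bounds_first_harmonic:
  assumes "7 \<le> j"
  shows "g1 j 2 > 0 \<and> \<bar>g3 j 2\<bar> < g1 j 2 + g2 j"
proof -
  define f where "f i = csc_sin (real i * pi / real (2 * j))" for i
  have g1: "g1 j 2 = (\<Sum>k=1..j-1. csc_sin (real k * pi / real j)) / 4 - real j / 2"
    using g1_eq_singular[of 1 j, unfolded one_add_one g1_singular_one] assms by simp
  have g2: "g2 j = g2_singular j" and g3: "g3 j 2 = g3_singular j 1 + real j / 2"
    using assms g2_eq_singular g3_eq_singular[of 1 j, unfolded one_add_one] by auto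
  have "(\<Sum>k=1..j-1. csc_sin (real k * pi / real j)) > 2 * real j"
    using assms by (intro sum_csc_sin_gt) auto
  then have g1_pos: "g1 j 2 > 0"
    unfolding g1 by simp
  have "(\<Sum>k=1..j-1. f (2 * k)) = (\<Sum>k=1..j-1. csc_sin (real k * pi / real j))"
    by (simp add: f_def)
  then have "(\<Sum>i=1..2*j-1. f i)
      = (\<Sum>k=1..j-1. csc_sin (real k * pi / real j)) + (\<Sum>k=1..j. f (2 * k - 1))"
    using sum_odd_even_split[of f j] by simp
  moreover have "(\<Sum>i=1..2*j-1. f i) > 2 * real (2 * j)"
    unfolding f_def using assms by (intro sum_csc_sin_gt) auto
  ultimately have "g3 j 2 < g1 j 2 + g2 j"
    using g2_minus_g3_singular_one[of j] unfolding g1 g2 g3 f_def by simp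
  moreover have "- g3 j 2 < g1 j 2 + g2 j"
    using g1_pos g2_plus_g3_singular_one_nonneg[of j] unfolding g2 g3 by simp
  ultimately show ?thesis
    using g1_pos by linarith
qed

lemma chi_form_pos:
  fixes a b x y z :: real
  assumes "0 < a" "0 < b" "0 < x" "0 < y" "\<bar>z\<bar> < x + y"
  shows "a * b * (x^2 + y^2 - z^2) + (a^2 + b^2) * x * y > 0"
proof -
  have "\<bar>z\<bar>^2 < (x + y)^2"
    using assms by (intro power_strict_mono) auto
  then have "z^2 < (x + y)^2"
    by simp
  then have "a * b * ((x + y)^2 - z^2) > 0"
    using assms by simp
  moreover have "(a - b)^2 * x * y \<ge> 0"
    using assms by simp
  moreover have "a * b * (x^2 + y^2 - z^2) + (a^2 + b^2) * x * y
      = a * b * ((x + y)^2 - z^2) + (a - b)^2 * x * y"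
    by (simp add: power2_eq_square algebra_simps)
  ultimately show ?thesis by linarith
qed

theorem mainTheorem7:
  fixes j l :: nat and \<mu>1 \<mu>2 :: real
  assumes "j \<ge> 7" and "\<mu>1 > 0" and "\<mu>2 > 0"
    and "2 \<le> l" and "l \<le> (j + 1) div 2"
  shows "g1 j l > 0 \<and> chi \<mu>1 \<mu>2 j l > 0"
proof -
  define m where "m = l - 1"
  have l: "l = m + 1" and m: "1 \<le> m" "2 * m < j"
    using assms(4,5) unfolding m_def by presburger+
  have "g1 j l > 0 \<and> \<bar>g3 j l\<bar> < g1 j l + g2 j"
  proof (cases "m = 1")
    case True
    then have "l = 2" using l by simp
    then show ?thesis using g_bounds_first_harmonic assms(1) by simp
  next
    case False
    then show ?thesis using g_bounds_higher_harmonic m l by simp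
  qed
  moreover have "g2 j > 0"
    using assms(1) g2_eq_singular g2_singular_pos by simp
  ultimately show ?thesis
    unfolding chi_def using assms(2,3) chi_form_pos by auto
qed

end
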